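(* Let $n\ge1$ and let $P=(Q,\{a,\varepsilon\},\Sigma,R,\{q_f\},q_{in},a_{in})$ be an order-$n$ HOPDA such that every rule of $R$ whose operation is $\mathrm{push}_n$ or $\mathrm{pop}_n$ has output $\varepsilon$, and whose language is $L(P)=\{$words of runs from $(q_{in},[\cdots[a_{in}]_1\cdots]_n)$ to $(q_f,[\,]_n)\}$, where $[\,]_n$ is the empty order-$n$ stack. Let $\widehat{P}$ be the order-$(n-1)$ HOPDA with tests defined below. Then $\mathrm{Unb}_a(L(P))$ holds if and only if $\mathrm{Unb}_a(L(\widehat{P}))$ holds. Definition of $\widehat{P}$: for $q,q'\in Q$ let $C_{q,q'}$ be the set of order-$(n-1)$ stacks $w$ such that $P$ has a run from $(q,[w]_n)$ to $(q',[\,]_n)$, and $C^a_{q,q'}\subseteq C_{q,q'}$ the set of those $w$ for which such a run exists that outputs at least one $a$; let $\mathrm{True}$ be the set of all order-$(n-1)$ stacks. The control states of $\widehat{P}$ are the pairs $(p_1,p_2)\in Q\times Q$ plus a fresh state $f$; the initial state is $(q_{in},q_f)$, the initial stack is $[\cdots[a_{in}]_1\cdots]_{n-1}$ (just $a_{in}$ if $n=1$), the final states are $\{f\}$, and the rules (written source, top symbol, test, output, operation, target) are: (i) for each $(p_1,b,\gamma,op,p_1')\in R$ with $op\notin\{\mathrm{push}_n,\mathrm{pop}_n\}$ and each $p_2\in Q$: $((p_1,p_2),b,\mathrm{True},\gamma,op,(p_1',p_2))$; (ii) for each $(p_1,b,\varepsilon,\mathrm{pop}_n,p_2)\in R$: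 $((p_1,p_2),b,\mathrm{True},\varepsilon,\mathrm{rew}_b,f)$; (iii) for each $(p_1,b,\varepsilon,\mathrm{push}_n,p_1')\in R$ and all $p,p_2\in Q$: $((p_1,p_2),b,C_{p,p_2},\varepsilon,\mathrm{rew}_b,(p_1',p))$ and $((p_1,p_2),b,C^a_{p,p_2},a,\mathrm{rew}_b,(p_1',p))$; (iv) for each $(p_1,b,\varepsilon,\mathrm{push}_n,p_1')\in R$ and all $p,p_2\in Q$: $((p_1,p_2),b,C_{p_1',p},\varepsilon,\mathrm{rew}_b,(p,p_2))$ and $((p_1,p_2),b,C^a_{p_1',p},a,\mathrm{rew}_b,(p,p_2))$.
   Context: Order-$0$ stacks are elements of a finite alphabet $\Sigma$; an order-$(k+1)$ stack is a finite (possibly empty) sequence $[w_1\dots w_\ell]_{k+1}$ of order-$k$ stacks, $w_1$ topmost. For an order-$n$ stack: $\mathrm{top}_1$ is the topmost symbol; $\mathrm{rew}_b$ replaces the topmost symbol by $b$; $\mathrm{push}_k$ ($1\le k\le n$) replaces the topmost order-$k$ stack $[w_1w_2\dots w_\ell]_k$ by $[w_1w_1w_2\dots w_\ell]_k$; $\mathrm{pop}_k$ replaces it by $[w_2\dots w_\ell]_k$. $\mathrm{Ops}_n$ is the set of these operations for $1\le k\le n$ (only $\mathrm{rew}_b$ when $n=0$). An order-$n$ HOPDA $(Q,\Gamma,\Sigma,R,F,q_{in},a_{in})$ has rules $R\subseteq Q\times\Sigma\times\Gamma\times\mathrm{Ops}_n\times Q$, where $\Gamma$ contains $\varepsilon$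 denoting the empty word; $(q,w)\xrightarrow{\gamma}(q',op(w))$ when $(q,b,\gamma,op,q')\in R$ and $\mathrm{top}_1(w)=b$; a run's word is the concatenation of its outputs. An order-$n$ HOPDA with tests has rules $(q,b,T,\gamma,op,q')$ where $T$ is a set of order-$n$ stacks, and the transition $(q,w)\xrightarrow{\gamma}(q',op(w))$ additionally requires $w\in T$. Unless stated otherwise, $L(\cdot)$ is the set of words of runs from $(q_{in},[\cdots[a_{in}]_1\cdots]_n)$ to a configuration with control state in $F$. $\mathrm{Unb}_a(L)$ holds iff for every $N$ some $w\in L$ contains at least $N$ occurrences of $a$. *)

theory Defs
  imports Main
begin

(* An order-0 stack is a symbol; an order-(k+1) stack is a list of order-k stacks,
   the head of the list being the topmost element. The order is given by wf_stack. *)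
datatype 's stack = Sym 's | Stk "'s stack list"

fun wf_stack :: "'s set \<Rightarrow> nat \<Rightarrow> 's stack \<Rightarrow> bool" where
  "wf_stack S 0 (Sym b) = (b \<in> S)"
| "wf_stack S (Suc k) (Stk ws) = (\<forall>w\<in>set ws. wf_stack S k w)"
| "wf_stack S _ _ = False"

definition init_stack :: "nat \<Rightarrow> 's \<Rightarrow> 's stack" where
  "init_stack n a = ((\<lambda>w. Stk [w]) ^^ n) (Sym a)"

datatype 's op = Rew 's | Push nat | Pop nat

fun top1 :: "'s stack \<Rightarrow> 's option" where
  "top1 (Sym b) = Some b"
| "top1 (Stk []) = None"
| "top1 (Stk (w # ws)) = top1 w"

fun rew_top :: "'s \<Rightarrow> 's stack \<Rightarrow> 's stack option" where
  "rew_top b (Sym _) = Some (Sym b)"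
| "rew_top b (Stk []) = None"
| "rew_top b (Stk (w # ws)) = map_option (\<lambda>w'. Stk (w' # ws)) (rew_top b w)"

fun push_at :: "nat \<Rightarrow> nat \<Rightarrow> 's stack \<Rightarrow> 's stack option" where
  "push_at k m (Stk (w # ws)) =
     (if k = m then Some (Stk (w # w # ws))
      else if k < m then map_option (\<lambda>w'. Stk (w' # ws)) (push_at k (m - 1) w)
      else None)"
| "push_at k m _ = None"

fun pop_at :: "nat \<Rightarrow> nat \<Rightarrow> 's stack \<Rightarrow> 's stack option" where
  "pop_at k m (Stk (w # ws)) =
     (if k = m then Some (Stk ws)
      else if k < m then map_option (\<lambda>w'. Stk (w' # ws)) (pop_at k (m - 1) w)
      else None)"
| "pop_at k m _ = None"

fun apply_op :: "nat \<Rightarrow> 's op \<Rightarrow> 's stack \<Rightarrow> 's stack option" where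
  "apply_op n (Rew b) w = rew_top b w"
| "apply_op n (Push k) w = (if 1 \<le> k \<and> k \<le> n then push_at k n w else None)"
| "apply_op n (Pop k) w = (if 1 \<le> k \<and> k \<le> n then pop_at k n w else None)"

definition Ops :: "nat \<Rightarrow> 's set \<Rightarrow> 's op set" where
  "Ops n S = Rew ` S \<union> {Push k | k. 1 \<le> k \<and> k \<le> n} \<union> {Pop k | k. 1 \<le> k \<and> k \<le> n}"

(* outputs are 'o option; None stands for the empty word epsilon *)
definition out :: "'o option \<Rightarrow> 'o list" where
  "out g = (case g of None \<Rightarrow> [] | Some x \<Rightarrow> [x])"

definition is_hopda ::
  "nat \<Rightarrow> 'q set \<Rightarrow> 'o option set \<Rightarrow> 's set \<Rightarrow> ('q \<times> 's \<times> 'o option \<times> 's op \<times> 'q) set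
   \<Rightarrow> 'q set \<Rightarrow> 'q \<Rightarrow> 's \<Rightarrow> bool" where
  "is_hopda n Q \<Gamma> \<Sigma> R F qin ain \<longleftrightarrow>
     finite Q \<and> finite \<Gamma> \<and> finite \<Sigma> \<and> None \<in> \<Gamma> \<and>
     R \<subseteq> Q \<times> \<Sigma> \<times> \<Gamma> \<times> Ops n \<Sigma> \<times> Q \<and> F \<subseteq> Q \<and> qin \<in> Q \<and> ain \<in> \<Sigma>"

inductive hrun :: "nat \<Rightarrow> ('q \<times> 's \<times> 'o option \<times> 's op \<times> 'q) set
    \<Rightarrow> 'q \<times> 's stack \<Rightarrow> 'o list \<Rightarrow> 'q \<times> 's stack \<Rightarrow> bool"
  for n R where
  hrun_refl: "hrun n R c [] c"
| hrun_step: "\<lbrakk>(q, b, g, opr, q') \<in> R; top1 w = Some b; apply_op n opr w = Some w';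
               hrun n R (q', w') u c\<rbrakk> \<Longrightarrow> hrun n R (q, w) (out g @ u) c"

inductive trun :: "nat \<Rightarrow> ('q \<times> 's \<times> 's stack set \<times> 'o option \<times> 's op \<times> 'q) set
    \<Rightarrow> 'q \<times> 's stack \<Rightarrow> 'o list \<Rightarrow> 'q \<times> 's stack \<Rightarrow> bool"
  for n R where
  trun_refl: "trun n R c [] c"
| trun_step: "\<lbrakk>(q, b, T, g, opr, q') \<in> R; top1 w = Some b; w \<in> T; apply_op n opr w = Some w';
               trun n R (q', w') u c\<rbrakk> \<Longrightarrow> trun n R (q, w) (out g @ u) c"

definition Unb :: "'o \<Rightarrow> 'o list set \<Rightarrow> bool" where
  "Unb a L \<longleftrightarrow> (\<forall>N. \<exists>w\<in>L. count_list w a \<ge> N)"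

definition Cset :: "nat \<Rightarrow> 's set \<Rightarrow> ('q \<times> 's \<times> 'o option \<times> 's op \<times> 'q) set
    \<Rightarrow> 'q \<Rightarrow> 'q \<Rightarrow> 's stack set" where
  "Cset n \<Sigma> R q q' = {w. wf_stack \<Sigma> (n - 1) w \<and> (\<exists>u. hrun n R (q, Stk [w]) u (q', Stk []))}"

definition Caset :: "nat \<Rightarrow> 's set \<Rightarrow> ('q \<times> 's \<times> 'o option \<times> 's op \<times> 'q) set
    \<Rightarrow> 'o \<Rightarrow> 'q \<Rightarrow> 'q \<Rightarrow> 's stack set" where
  "Caset n \<Sigma> R a q q' = {w. wf_stack \<Sigma> (n - 1) w \<and> (\<exists>u. hrun n R (q, Stk [w]) u (q', Stk []) \<and> a \<in> set u)}"

definition TrueSet :: "nat \<Rightarrow> 's set \<Rightarrow> 's stack set" where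
  "TrueSet n \<Sigma> = {w. wf_stack \<Sigma> (n - 1) w}"

(* control states of P-hat: Some (p1,p2) for pairs, None for the fresh state f *)
definition hat_rules :: "nat \<Rightarrow> 'q set \<Rightarrow> 's set \<Rightarrow> ('q \<times> 's \<times> 'o option \<times> 's op \<times> 'q) set \<Rightarrow> 'o
    \<Rightarrow> (('q \<times> 'q) option \<times> 's \<times> 's stack set \<times> 'o option \<times> 's op \<times> ('q \<times> 'q) option) set" where
  "hat_rules n Q \<Sigma> R a =
     {(Some (p1, p2), b, TrueSet n \<Sigma>, g, opr, Some (p1', p2)) | p1 b g opr p1' p2.
        (p1, b, g, opr, p1') \<in> R \<and> opr \<notin> {Push n, Pop n} \<and> p2 \<in> Q}
   \<union> {(Some (p1, p2), b, TrueSet n \<Sigma>, None, Rew b, None) | p1 b p2.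
        (p1, b, None, Pop n, p2) \<in> R}
   \<union> {(Some (p1, p2), b, Cset n \<Sigma> R p p2, None, Rew b, Some (p1', p)) | p1 b p1' p p2.
        (p1, b, None, Push n, p1') \<in> R \<and> p \<in> Q \<and> p2 \<in> Q}
   \<union> {(Some (p1, p2), b, Caset n \<Sigma> R a p p2, Some a, Rew b, Some (p1', p)) | p1 b p1' p p2.
        (p1, b, None, Push n, p1') \<in> R \<and> p \<in> Q \<and> p2 \<in> Q}
   \<union> {(Some (p1, p2), b, Cset n \<Sigma> R p1' p, None, Rew b, Some (p, p2)) | p1 b p1' p p2.
        (p1, b, None, Push n, p1') \<in> R \<and> p \<in> Q \<and> p2 \<in> Q}
   \<union> {(Some (p1, p2), b, Caset n \<Sigma> R a p1' p, Some a, Rew b, Some (p, p2)) | p1 b p1' p p2.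
        (p1, b, None, Push n, p1') \<in> R \<and> p \<in> Q \<and> p2 \<in> Q}"

definition lang_P :: "nat \<Rightarrow> ('q \<times> 's \<times> 'o option \<times> 's op \<times> 'q) set \<Rightarrow> 'q \<Rightarrow> 's \<Rightarrow> 'q \<Rightarrow> 'o list set" where
  "lang_P n R qin ain qf = {u. hrun n R (qin, init_stack n ain) u (qf, Stk [])}"

definition lang_hat :: "nat \<Rightarrow> 'q set \<Rightarrow> 's set \<Rightarrow> ('q \<times> 's \<times> 'o option \<times> 's op \<times> 'q) set \<Rightarrow> 'o
    \<Rightarrow> 'q \<Rightarrow> 's \<Rightarrow> 'q \<Rightarrow> 'o list set" where
  "lang_hat n Q \<Sigma> R a qin ain qf =
     {u. \<exists>w. trun (n - 1) (hat_rules n Q \<Sigma> R a) (Some (qin, qf), init_stack (n - 1) ain) u (None, w)}"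

end

theory Submission
  imports Defs
begin

text \<open>
  A run of \<open>P\<close> from a one-element stack \<open>[w]\<^sub>n\<close> to \<open>[]\<^sub>n\<close> either acts below the top level,
  or pops \<open>w\<close>, or pushes a copy of \<open>w\<close>; in the last case it splits into two runs from \<open>[w]\<^sub>n\<close>
  to \<open>[]\<^sub>n\<close>, one for each copy. \<open>\<hat>P\<close> simulates one of the two halves and uses the test
  \<open>C\<close> or \<open>C\<^sup>a\<close> to certify the other one, emitting an \<open>a\<close> if the skipped half does.
  Always following the half whose simulation emits more \<open>a\<close>'s, a run of \<open>P\<close> with \<open>c\<close>
  occurrences of \<open>a\<close> yields a run of \<open>\<hat>P\<close> with \<open>m\<close> occurrences where \<open>c < 2\<^sup>m\<close>.
  Conversely every run of \<open>\<hat>P\<close> is realised by a run of \<open>P\<close> with at least as many \<open>a\<close>'s.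
\<close>

lemma top1_append_bottom: "top1 (Stk xs) = Some b \<Longrightarrow> top1 (Stk (xs @ ys)) = Some b"
  by (cases xs) auto

lemma apply_op_append_bottom:
  assumes "apply_op n opr (Stk xs) = Some W"
  shows "\<exists>xs'. W = Stk xs' \<and> apply_op n opr (Stk (xs @ ys)) = Some (Stk (xs' @ ys))"
  using assms by (cases xs; cases opr) (auto split: if_splits)

lemma apply_op_below_top:
  "opr \<notin> {Push n, Pop n} \<Longrightarrow>
    apply_op n opr (Stk (w # ys)) = map_option (\<lambda>w'. Stk (w' # ys)) (apply_op (n - 1) opr w)"
  by (cases opr) auto

lemma rew_top_top1: "top1 w = Some b \<Longrightarrow> rew_top b w = Some w"
  by (induction w rule: top1.induct) auto

lemma init_stack_Suc: "init_stack (Suc m) a = Stk [init_stack m a]"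
  by (simp add: init_stack_def)

lemma wf_stack_init_stack: "a \<in> S \<Longrightarrow> wf_stack S m (init_stack m a)"
  by (induction m) (auto simp: init_stack_def)

lemma wf_stack_rew_top: "wf_stack S m w \<Longrightarrow> rew_top b w = Some w' \<Longrightarrow> b \<in> S \<Longrightarrow> wf_stack S m w'"
  by (induction b w arbitrary: m w' rule: rew_top.induct) (auto elim: wf_stack.elims)

lemma wf_stack_push_at: "wf_stack S m w \<Longrightarrow> push_at k m w = Some w' \<Longrightarrow> wf_stack S m w'"
  by (induction k m w arbitrary: w' rule: push_at.induct) (auto elim: wf_stack.elims split: if_splits)

lemma wf_stack_pop_at: "wf_stack S m w \<Longrightarrow> pop_at k m w = Some w' \<Longrightarrow> wf_stack S m w'"
  by (induction k m w arbitrary: w' rule: pop_at.induct) (auto elim: wf_stack.elims split: if_splits)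

lemma wf_stack_apply_op:
  "wf_stack S m w \<Longrightarrow> apply_op m opr w = Some w' \<Longrightarrow> opr \<in> Ops n S \<Longrightarrow> wf_stack S m w'"
  by (cases opr) (auto simp: Ops_def split: if_splits intro: wf_stack_rew_top wf_stack_push_at wf_stack_pop_at)

inductive hrun_steps :: "nat \<Rightarrow> ('q \<times> 's \<times> 'o option \<times> 's op \<times> 'q) set
    \<Rightarrow> nat \<Rightarrow> 'q \<times> 's stack \<Rightarrow> 'o list \<Rightarrow> 'q \<times> 's stack \<Rightarrow> bool"
  for n R where
  hrun_steps_refl: "hrun_steps n R 0 c [] c"
| hrun_steps_step: "\<lbrakk>(q, b, g, opr, q') \<in> R; top1 w = Some b; apply_op n opr w = Some w';
               hrun_steps n R k (q', w') u c\<rbrakk> \<Longrightarrow> hrun_steps n R (Suc k) (q, w) (out g @ u) c"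

lemma hrun_iff_hrun_steps: "hrun n R c u c' \<longleftrightarrow> (\<exists>k. hrun_steps n R k c u c')"
proof
  show "hrun n R c u c' \<Longrightarrow> \<exists>k. hrun_steps n R k c u c'"
    by (induction rule: hrun.induct) (auto intro: hrun_steps.intros)
  show "\<exists>k. hrun_steps n R k c u c' \<Longrightarrow> hrun n R c u c'"
    by (auto elim: hrun_steps.induct intro: hrun.intros)
qed

lemma hrun_steps_append:
  "hrun_steps n R k1 c u c' \<Longrightarrow> hrun_steps n R k2 c' v c'' \<Longrightarrow> hrun_steps n R (k1 + k2) c (u @ v) c''"
  by (induction rule: hrun_steps.induct) (auto intro: hrun_steps.intros)

lemma hrun_append: "hrun n R c u c' \<Longrightarrow> hrun n R c' v c'' \<Longrightarrow> hrun n R c (u @ v) c''"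
  by (induction rule: hrun.induct) (auto intro: hrun.intros)

lemma hrun_steps_from_empty:
  "hrun_steps n R k (q, Stk []) u c \<Longrightarrow> k = 0 \<and> u = [] \<and> c = (q, Stk [])"
  by (erule hrun_steps.cases) auto

lemma hrun_steps_append_bottom:
  assumes "hrun_steps n R k (q, Stk xs) u (q', Stk xs')"
  shows "hrun_steps n R k (q, Stk (xs @ ys)) u (q', Stk (xs' @ ys))"
proof -
  have "hrun_steps n R k c u c' \<Longrightarrow> c = (q, Stk xs) \<Longrightarrow> c' = (q', Stk xs') \<Longrightarrow>
      hrun_steps n R k (q, Stk (xs @ ys)) u (q', Stk (xs' @ ys))" for c c'
  proof (induction arbitrary: q xs rule: hrun_steps.induct)
    case (hrun_steps_step q0 b g opr q1 w w' k u c)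
    then obtain xs'' where "w' = Stk xs''" "apply_op n opr (Stk (xs @ ys)) = Some (Stk (xs'' @ ys))"
      using apply_op_append_bottom by blast
    with hrun_steps_step show ?case by (auto intro: hrun_steps.intros top1_append_bottom)
  qed (auto intro: hrun_steps.intros)
  with assms show ?thesis by blast
qed

lemma hrun_append_bottom:
  "hrun n R (q, Stk xs) u (q', Stk xs') \<Longrightarrow> hrun n R (q, Stk (xs @ ys)) u (q', Stk (xs' @ ys))"
  by (meson hrun_iff_hrun_steps hrun_steps_append_bottom)

text \<open>Strong induction on the length of the run: after \<open>push\<^sub>n\<close> both copies of \<open>w\<close> are split
  off in turn, the second one from a proper suffix of the run.\<close>

lemma hrun_steps_split_top:
  assumes "hrun_steps n R k (q, Stk (w # ys)) u (q', Stk zs)" "length zs \<le> length ys"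
  shows "\<exists>p u1 u2 k1 k2. hrun_steps n R k1 (q, Stk [w]) u1 (p, Stk [])
           \<and> hrun_steps n R k2 (p, Stk ys) u2 (q', Stk zs) \<and> u = u1 @ u2 \<and> k = k1 + k2"
  using assms
proof (induction k arbitrary: q w ys u rule: less_induct)
  case (less k)
  from less.prems(1) show ?case
  proof (cases rule: hrun_steps.cases)
    case hrun_steps_refl
    then show ?thesis using less.prems by auto
  next
    case (hrun_steps_step b g opr q1 W' k0 u0)
    have top: "top1 (Stk [w]) = Some b" using hrun_steps_step by simp
    consider (pop) "opr = Pop n" | (push) "opr = Push n" | (lower) "opr \<notin> {Push n, Pop n}" by blast
    then show ?thesis
    proof cases
      case pop
      then have "W' = Stk ys" "apply_op n opr (Stk [w]) = Some (Stk [])"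
        using hrun_steps_step by (simp_all split: if_splits)
      then have "hrun_steps n R (Suc 0) (q, Stk [w]) (out g @ []) (q1, Stk [])"
        using hrun_steps_step top by (intro hrun_steps.hrun_steps_step[of q b g opr q1]) (auto intro: hrun_steps.intros)
      then show ?thesis using hrun_steps_step \<open>W' = Stk ys\<close> by fastforce
    next
      case push
      then have W': "W' = Stk (w # w # ys)" "apply_op n opr (Stk [w]) = Some (Stk [w, w])"
        using hrun_steps_step by (simp_all split: if_splits)
      obtain p u1 u2 k1 k2 where A: "hrun_steps n R k1 (q1, Stk [w]) u1 (p, Stk [])"
        "hrun_steps n R k2 (p, Stk (w # ys)) u2 (q', Stk zs)" "u0 = u1 @ u2" "k0 = k1 + k2"
        using less.IH[of k0 q1 w "w # ys" u0] hrun_steps_step W' less.prems by auto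
      obtain p' u3 u4 k3 k4 where B: "hrun_steps n R k3 (p, Stk [w]) u3 (p', Stk [])"
        "hrun_steps n R k4 (p', Stk ys) u4 (q', Stk zs)" "u2 = u3 @ u4" "k2 = k3 + k4"
        using less.IH[of k2 p w ys u2] A hrun_steps_step less.prems by auto
      have "hrun_steps n R k1 (q1, Stk [w, w]) u1 (p, Stk [w])"
        using hrun_steps_append_bottom[OF A(1), of "[w]"] by simp
      then have "hrun_steps n R (Suc k1) (q, Stk [w]) (out g @ u1) (p, Stk [w])"
        using hrun_steps_step W' top by (auto intro: hrun_steps.intros)
      from hrun_steps_append[OF this B(1)] B(2) show ?thesis using A B hrun_steps_step by fastforce
    next
      case lower
      obtain w' where w': "apply_op (n - 1) opr w = Some w'" "W' = Stk (w' # ys)"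
        using hrun_steps_step apply_op_below_top[OF lower, of w ys] by auto
      obtain p u1 u2 k1 k2 where A: "hrun_steps n R k1 (q1, Stk [w']) u1 (p, Stk [])"
        "hrun_steps n R k2 (p, Stk ys) u2 (q', Stk zs)" "u0 = u1 @ u2" "k0 = k1 + k2"
        using less.IH[of k0 q1 w' ys u0] hrun_steps_step w' less.prems by auto
      have "apply_op n opr (Stk [w]) = Some (Stk [w'])"
        using apply_op_below_top[OF lower, of w "[]"] w' by simp
      then have "hrun_steps n R (Suc k1) (q, Stk [w]) (out g @ u1) (p, Stk [])"
        using hrun_steps_step top A by (auto intro: hrun_steps.intros)
      then show ?thesis using A hrun_steps_step by fastforce
    qed
  qed
qed

lemma hrun_push_top:
  assumes "1 \<le> n" "(p1, b, g, Push n, p1') \<in> R" "top1 w = Some b"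
    and "hrun n R (p1', Stk [w]) u1 (p, Stk [])" "hrun n R (p, Stk [w]) u2 (p2, Stk [])"
  shows "hrun n R (p1, Stk [w]) (out g @ u1 @ u2) (p2, Stk [])"
proof -
  have "hrun n R (p1', Stk [w, w]) u1 (p, Stk [w])"
    using hrun_append_bottom[OF assms(4), of "[w]"] by simp
  then have "hrun n R (p1, Stk [w]) (out g @ u1) (p, Stk [w])"
    using assms(1-3) by (intro hrun.intros(2)) auto
  from hrun_append[OF this assms(5)] show ?thesis by simp
qed

lemma hat_run_from_final: "trun m (hat_rules n Q \<Sigma> R a) (None, w) u c \<Longrightarrow> u = []"
  by (erule trun.cases) (auto simp: hat_rules_def)

lemma hat_rulesE:
  assumes "(Some (p1, p2), b, T, g, opr, q') \<in> hat_rules n Q \<Sigma> R a" "w \<in> T"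
  obtains (lower) p1' where "q' = Some (p1', p2)" "(p1, b, g, opr, p1') \<in> R" "opr \<notin> {Push n, Pop n}"
  | (pop) "q' = None" "g = None" "opr = Rew b" "(p1, b, None, Pop n, p2) \<in> R"
  | (push_left) p1' p v where "q' = Some (p1', p)" "opr = Rew b" "(p1, b, None, Push n, p1') \<in> R"
      "hrun n R (p, Stk [w]) v (p2, Stk [])" "count_list (out g) a \<le> count_list v a"
  | (push_right) p1' p v where "q' = Some (p, p2)" "opr = Rew b" "(p1, b, None, Push n, p1') \<in> R"
      "hrun n R (p1', Stk [w]) v (p, Stk [])" "count_list (out g) a \<le> count_list v a"
proof -
  have a_occurs: "a \<in> set v \<Longrightarrow> count_list (out (Some a)) a \<le> count_list v a" for v
    by (cases "count_list v a") (auto simp: out_def count_list_0_iff)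
  show thesis
    using assms unfolding hat_rules_def Cset_def Caset_def
    apply (elim UnE; clarsimp)
    subgoal by (rule lower) auto
    subgoal by (rule pop) auto
    subgoal by (rule push_left) (auto simp: out_def)
    subgoal by (rule push_left) (auto simp: a_occurs)
    subgoal by (rule push_right) (auto simp: out_def)
    subgoal by (rule push_right) (auto simp: a_occurs)
    done
qed

lemma hat_run_imp_run:
  assumes "1 \<le> n" "trun (n - 1) (hat_rules n Q \<Sigma> R a) (Some (p1, p2), w) u (None, w')"
  shows "\<exists>u'. hrun n R (p1, Stk [w]) u' (p2, Stk []) \<and> count_list u a \<le> count_list u' a"
proof -
  have "trun (n - 1) (hat_rules n Q \<Sigma> R a) c u c' \<Longrightarrow> fst c' = None \<Longrightarrow> c = (Some (p1, p2), w) \<Longrightarrow>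
      \<exists>u'. hrun n R (p1, Stk [w]) u' (p2, Stk []) \<and> count_list u a \<le> count_list u' a" for c c'
  proof (induction arbitrary: p1 p2 w rule: trun.induct)
    case (trun_step q b T g opr q' w0 w0' u c)
    then have rule: "(Some (p1, p2), b, T, g, opr, q') \<in> hat_rules n Q \<Sigma> R a" and "w \<in> T"
      and top: "top1 w = Some b" and step: "apply_op (n - 1) opr w = Some w0'"
      and rest: "trun (n - 1) (hat_rules n Q \<Sigma> R a) (q', w0') u c" by auto
    have IH: "q' = Some (r1, r2) \<Longrightarrow>
        \<exists>u'. hrun n R (r1, Stk [w0']) u' (r2, Stk []) \<and> count_list u a \<le> count_list u' a" for r1 r2
      using trun_step.IH trun_step.prems(1) by blast
    have rew: "opr = Rew b \<Longrightarrow> w0' = w" using step rew_top_top1[OF top] by simp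
    from rule \<open>w \<in> T\<close> show ?case
    proof (cases rule: hat_rulesE)
      case (lower p1')
      then obtain u' where u': "hrun n R (p1', Stk [w0']) u' (p2, Stk [])" "count_list u a \<le> count_list u' a"
        using IH by blast
      have "apply_op n opr (Stk [w]) = Some (Stk [w0'])"
        using apply_op_below_top[OF lower(3), of w "[]"] step by simp
      with lower(2) top u'(1) have "hrun n R (p1, Stk [w]) (out g @ u') (p2, Stk [])"
        by (intro hrun.intros(2)) simp_all
      with u'(2) show ?thesis by auto
    next
      case pop
      then have "hrun n R (p1, Stk [w]) (out None @ []) (p2, Stk [])"
        using top assms(1) by (intro hrun.intros(2)) (auto intro: hrun.intros)
      moreover have "u = []" using rest pop(1) by (simp add: hat_run_from_final)
      ultimately show ?thesis using pop(2) by auto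
    next
      case (push_left p1' p v)
      then obtain u' where u': "hrun n R (p1', Stk [w]) u' (p, Stk [])" "count_list u a \<le> count_list u' a"
        using IH rew by blast
      have "hrun n R (p1, Stk [w]) (u' @ v) (p2, Stk [])"
        using hrun_push_top[OF assms(1) push_left(3) top u'(1) push_left(4)] by (simp add: out_def)
      with push_left(5) u'(2) show ?thesis by (intro exI[of _ "u' @ v"]) simp
    next
      case (push_right p1' p v)
      then obtain u' where u': "hrun n R (p, Stk [w]) u' (p2, Stk [])" "count_list u a \<le> count_list u' a"
        using IH rew by blast
      have "hrun n R (p1, Stk [w]) (v @ u') (p2, Stk [])"
        using hrun_push_top[OF assms(1) push_right(3) top push_right(4) u'(1)] by (simp add: out_def)
      with push_right(5) u'(2) show ?thesis by (intro exI[of _ "v @ u'"]) simp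
    qed
  qed simp
  from this[OF assms(2)] show ?thesis by simp
qed

lemma hat_rules_lower:
  "(p1, b, g, opr, p1') \<in> R \<Longrightarrow> opr \<notin> {Push n, Pop n} \<Longrightarrow> p2 \<in> Q \<Longrightarrow>
    (Some (p1, p2), b, TrueSet n \<Sigma>, g, opr, Some (p1', p2)) \<in> hat_rules n Q \<Sigma> R a"
  by (simp add: hat_rules_def)

lemma hat_rules_pop:
  "(p1, b, None, Pop n, p2) \<in> R \<Longrightarrow> (Some (p1, p2), b, TrueSet n \<Sigma>, None, Rew b, None) \<in> hat_rules n Q \<Sigma> R a"
  by (simp add: hat_rules_def)

lemma hat_rules_push_left:
  "(p1, b, None, Push n, p1') \<in> R \<Longrightarrow> p \<in> Q \<Longrightarrow> p2 \<in> Q \<Longrightarrow>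
    (T, g) \<in> {(Cset n \<Sigma> R p p2, None), (Caset n \<Sigma> R a p p2, Some a)} \<Longrightarrow>
    (Some (p1, p2), b, T, g, Rew b, Some (p1', p)) \<in> hat_rules n Q \<Sigma> R a"
  by (simp add: hat_rules_def)

lemma hat_rules_push_right:
  "(p1, b, None, Push n, p1') \<in> R \<Longrightarrow> p \<in> Q \<Longrightarrow> p2 \<in> Q \<Longrightarrow>
    (T, g) \<in> {(Cset n \<Sigma> R p1' p, None), (Caset n \<Sigma> R a p1' p, Some a)} \<Longrightarrow>
    (Some (p1, p2), b, T, g, Rew b, Some (p, p2)) \<in> hat_rules n Q \<Sigma> R a"
  by (simp add: hat_rules_def) blast

lemma run_certificate:
  assumes "wf_stack \<Sigma> (n - 1) w" "hrun n R (r, Stk [w]) v (r', Stk [])"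
  obtains T g where "(T, g) \<in> {(Cset n \<Sigma> R r r', None), (Caset n \<Sigma> R a r r', Some a)}"
    "w \<in> T" "count_list (out g) a = min 1 (count_list v a)"
proof (cases "a \<in> set v")
  case True
  then have "count_list v a \<noteq> 0" by (simp add: count_list_0_iff)
  with assms True show thesis
    by (intro that[of "Caset n \<Sigma> R a r r'" "Some a"]) (auto simp: Caset_def out_def min_def)
next
  case False
  with assms show thesis
    by (intro that[of "Cset n \<Sigma> R r r'" None]) (auto simp: Cset_def out_def count_list_0_iff)
qed

lemma power_two_bound_add:
  fixes c1 c2 h1 h2 :: nat
  assumes "c1 < 2 ^ h1" "c2 < 2 ^ h2" "h2 \<le> h1"
  shows "c1 + c2 < 2 ^ (min 1 c2 + h1)"
proof (cases "c2 = 0")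
  case False
  have "c2 < 2 ^ h1" using assms(2,3) power_increasing[of h2 h1 "2::nat"] by linarith
  with assms(1) False show ?thesis by simp
qed (use assms in simp)

locale silent_top_hopda =
  fixes n :: nat and Q :: "'q set" and \<Sigma> :: "'s set"
    and R :: "('q \<times> 's \<times> 'o option \<times> 's op \<times> 'q) set"
  assumes order_pos: "1 \<le> n"
    and rules_in: "R \<subseteq> Q \<times> \<Sigma> \<times> UNIV \<times> Ops n \<Sigma> \<times> Q"
    and top_ops_silent: "\<And>p b g opr p'. (p, b, g, opr, p') \<in> R \<Longrightarrow> opr \<in> {Push n, Pop n} \<Longrightarrow> g = None"
begin

lemma hrun_target_in_states: "hrun n R c u c' \<Longrightarrow> c' = c \<or> fst c' \<in> Q"
  by (induction rule: hrun.induct) (use rules_in in auto)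

lemma hat_run_push:
  assumes push: "(p1, b, None, Push n, q1) \<in> R" and top: "top1 w = Some b"
    and wf: "wf_stack \<Sigma> (n - 1) w"
    and runs: "hrun n R (q1, Stk [w]) u1 (p, Stk [])" "hrun n R (p, Stk [w]) u2 (p2, Stk [])"
    and hat1: "trun (n - 1) (hat_rules n Q \<Sigma> R a) (Some (q1, p), w) h1 (None, x1)"
      "count_list u1 a < 2 ^ count_list h1 a"
    and hat2: "trun (n - 1) (hat_rules n Q \<Sigma> R a) (Some (p, p2), w) h2 (None, x2)"
      "count_list u2 a < 2 ^ count_list h2 a"
  shows "\<exists>h x. trun (n - 1) (hat_rules n Q \<Sigma> R a) (Some (p1, p2), w) h (None, x)
           \<and> count_list (u1 @ u2) a < 2 ^ count_list h a"
proof -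
  have states: "p \<in> Q" "p2 \<in> Q" using hrun_target_in_states runs by fastforce+
  have hat_step: "trun (n - 1) (hat_rules n Q \<Sigma> R a) (Some (p1, p2), w) (out g @ h) (None, x)"
    if "(Some (p1, p2), b, T, g, Rew b, q') \<in> hat_rules n Q \<Sigma> R a" "w \<in> T"
      "trun (n - 1) (hat_rules n Q \<Sigma> R a) (q', w) h (None, x)" for T g q' h x
    using that top rew_top_top1[OF top] by (auto intro: trun.intros(2))
  show ?thesis
  proof (cases "count_list h2 a \<le> count_list h1 a")
    case True
    obtain T g where "(T, g) \<in> {(Cset n \<Sigma> R p p2, None), (Caset n \<Sigma> R a p p2, Some a)}"
      "w \<in> T" and g: "count_list (out g) a = min 1 (count_list u2 a)"
      using run_certificate[OF wf runs(2)] .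
    then have "trun (n - 1) (hat_rules n Q \<Sigma> R a) (Some (p1, p2), w) (out g @ h1) (None, x1)"
      using hat_rules_push_left[OF push states] hat1(1) by (intro hat_step)
    moreover have "count_list (u1 @ u2) a < 2 ^ count_list (out g @ h1) a"
      using power_two_bound_add[OF hat1(2) hat2(2) True] g by simp
    ultimately show ?thesis by blast
  next
    case False
    obtain T g where "(T, g) \<in> {(Cset n \<Sigma> R q1 p, None), (Caset n \<Sigma> R a q1 p, Some a)}"
      "w \<in> T" and g: "count_list (out g) a = min 1 (count_list u1 a)"
      using run_certificate[OF wf runs(1)] .
    then have "trun (n - 1) (hat_rules n Q \<Sigma> R a) (Some (p1, p2), w) (out g @ h2) (None, x2)"
      using hat_rules_push_right[OF push states] hat2(1) by (intro hat_step)
    moreover have "count_list (u1 @ u2) a < 2 ^ count_list (out g @ h2) a"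
      using power_two_bound_add[OF hat2(2) hat1(2)] False g by (simp add: add.commute)
    ultimately show ?thesis by blast
  qed
qed

lemma run_imp_hat_run:
  assumes "hrun_steps n R k (p1, Stk [w]) u (p2, Stk [])" "wf_stack \<Sigma> (n - 1) w"
  shows "\<exists>h x. trun (n - 1) (hat_rules n Q \<Sigma> R a) (Some (p1, p2), w) h (None, x)
           \<and> count_list u a < 2 ^ count_list h a"
  using assms
proof (induction k arbitrary: p1 p2 w u rule: less_induct)
  case (less k)
  from less.prems(1) show ?case
  proof (cases rule: hrun_steps.cases)
    case (hrun_steps_step b g opr q1 W' k0 u0)
    have top: "top1 w = Some b" using hrun_steps_step by simp
    have rule: "(p1, b, g, opr, q1) \<in> R" "opr \<in> Ops n \<Sigma>" using hrun_steps_step rules_in by auto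
    consider (pop) "opr = Pop n" | (push) "opr = Push n" | (lower) "opr \<notin> {Push n, Pop n}" by blast
    then show ?thesis
    proof cases
      case pop
      then have "W' = Stk []" using hrun_steps_step order_pos by simp
      then have "u = out g" "q1 = p2" using hrun_steps_step hrun_steps_from_empty by fastforce+
      moreover have "g = None" using top_ops_silent rule pop by blast
      moreover have "(p1, b, None, Pop n, p2) \<in> R" using rule pop calculation by simp
      ultimately have "trun (n - 1) (hat_rules n Q \<Sigma> R a) (Some (p1, p2), w) (out None @ []) (None, w)"
        using top less.prems(2) rew_top_top1[OF top]
        by (intro trun.intros(2)[OF hat_rules_pop]) (auto simp: TrueSet_def intro: trun.intros)
      with \<open>u = out g\<close> \<open>g = None\<close> show ?thesis by (auto simp: out_def)
    next
      case push
      then have "W' = Stk [w, w]" "g = None" using hrun_steps_step order_pos top_ops_silent rule by auto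
      then obtain p u1 u2 k1 k2 where runs: "hrun_steps n R k1 (q1, Stk [w]) u1 (p, Stk [])"
        "hrun_steps n R k2 (p, Stk [w]) u2 (p2, Stk [])" "u = u1 @ u2" "k0 = k1 + k2"
        using hrun_steps_split_top[of n R k0 q1 w "[w]" u0 p2 "[]"] hrun_steps_step by (auto simp: out_def)
      obtain h1 x1 h2 x2 where
        "trun (n - 1) (hat_rules n Q \<Sigma> R a) (Some (q1, p), w) h1 (None, x1)" "count_list u1 a < 2 ^ count_list h1 a"
        "trun (n - 1) (hat_rules n Q \<Sigma> R a) (Some (p, p2), w) h2 (None, x2)" "count_list u2 a < 2 ^ count_list h2 a"
        using less.IH[OF _ runs(1)] less.IH[OF _ runs(2)] less.prems(2) runs(4) hrun_steps_step
        by (metis less_add_Suc1 less_add_Suc2)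
      with hat_run_push[OF _ top less.prems(2)] hrun_steps_step push \<open>g = None\<close> runs show ?thesis
        by (metis hrun_iff_hrun_steps)
    next
      case lower
      obtain w' where w': "apply_op (n - 1) opr w = Some w'" "W' = Stk [w']"
        using hrun_steps_step apply_op_below_top[OF lower, of w "[]"] by auto
      have "wf_stack \<Sigma> (n - 1) w'" using wf_stack_apply_op[OF less.prems(2) w'(1) rule(2)] .
      then obtain h x where hat: "trun (n - 1) (hat_rules n Q \<Sigma> R a) (Some (q1, p2), w') h (None, x)"
        "count_list u0 a < 2 ^ count_list h a"
        using less.IH[of k0 q1 w' u0 p2] hrun_steps_step w' by auto
      have "p2 \<in> Q" using hrun_target_in_states less.prems(1) hrun_iff_hrun_steps by fastforce
      with rule(1) lower have "(Some (p1, p2), b, TrueSet n \<Sigma>, g, opr, Some (q1, p2)) \<in> hat_rules n Q \<Sigma> R a"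
        by (rule hat_rules_lower)
      then have "trun (n - 1) (hat_rules n Q \<Sigma> R a) (Some (p1, p2), w) (out g @ h) (None, x)"
        using top less.prems(2) w' hat by (intro trun.intros(2)) (auto simp: TrueSet_def)
      moreover have "count_list (out g @ u0) a < 2 ^ count_list (out g @ h) a"
        using hat(2) by (cases g) (auto simp: out_def)
      ultimately show ?thesis using hrun_steps_step by blast
    qed
  qed
qed

end

lemma Unb_if_dominated:
  assumes "Unb a L" "\<And>u. u \<in> L \<Longrightarrow> \<exists>u'\<in>L'. count_list u a \<le> count_list u' a"
  shows "Unb a L'"
  using assms unfolding Unb_def by (meson order_trans)

lemma Unb_if_exp_dominated:
  assumes "Unb a L" "\<And>u. u \<in> L \<Longrightarrow> \<exists>u'\<in>L'. count_list u a < 2 ^ count_list u' a"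
  shows "Unb a L'"
  unfolding Unb_def
proof
  fix N
  obtain u where "u \<in> L" "2 ^ N \<le> count_list u a" using assms(1) unfolding Unb_def by blast
  then obtain u' where "u' \<in> L'" "(2::nat) ^ N < 2 ^ count_list u' a"
    using assms(2) by (meson order_le_less_trans)
  then show "\<exists>u'\<in>L'. N \<le> count_list u' a" by (auto dest: less_imp_le)
qed

theorem mainTheorem5:
  fixes n :: nat and Q :: "'q set" and \<Sigma> :: "'s set" and a :: 'o
    and R :: "('q \<times> 's \<times> 'o option \<times> 's op \<times> 'q) set"
    and qin qf :: 'q and ain :: 's
  assumes "n \<ge> 1"
    and "is_hopda n Q {None, Some a} \<Sigma> R {qf} qin ain"
    and "\<And>p b g opr p'. (p, b, g, opr, p') \<in> R \<Longrightarrow> opr \<in> {Push n, Pop n} \<Longrightarrow> g = None"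
  shows "Unb a (lang_P n R qin ain qf) \<longleftrightarrow> Unb a (lang_hat n Q \<Sigma> R a qin ain qf)"
proof -
  have rules: "R \<subseteq> Q \<times> \<Sigma> \<times> UNIV \<times> Ops n \<Sigma> \<times> Q" and "ain \<in> \<Sigma>"
    using assms(2) unfolding is_hopda_def by auto
  interpret silent_top_hopda n Q \<Sigma> R
    using assms(1,3) rules by unfold_locales
  have init: "init_stack n ain = Stk [init_stack (n - 1) ain]"
    using assms(1) init_stack_Suc[of "n - 1" ain] by simp
  have wf: "wf_stack \<Sigma> (n - 1) (init_stack (n - 1) ain)"
    using wf_stack_init_stack[OF \<open>ain \<in> \<Sigma>\<close>] .
  show ?thesis
  proof
    assume "Unb a (lang_P n R qin ain qf)"
    then show "Unb a (lang_hat n Q \<Sigma> R a qin ain qf)"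
      by (rule Unb_if_exp_dominated)
        (use run_imp_hat_run wf in \<open>fastforce simp: lang_P_def lang_hat_def init hrun_iff_hrun_steps\<close>)
  next
    assume "Unb a (lang_hat n Q \<Sigma> R a qin ain qf)"
    then show "Unb a (lang_P n R qin ain qf)"
      by (rule Unb_if_dominated)
        (use hat_run_imp_run[OF assms(1)] in \<open>fastforce simp: lang_P_def lang_hat_def init\<close>)
  qed
qed

end
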